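(* For a real square matrix $A$, the following are equivalent: (i) $A$ is a WCDD Z-matrix with positive diagonal entries; (ii) $A$ is a WDD M-matrix.
   Context: For a complex $M\times M$ matrix $A=(a_{ij})$: row $i$ is strictly diagonally dominant (SDD) if $|a_{ii}|>\sum_{j\neq i}|a_{ij}|$, and weakly diagonally dominant (WDD) if $|a_{ii}|\geq\sum_{j\neq i}|a_{ij}|$; $A$ is SDD (resp. WDD) if all its rows are. The directed graph of $A$ has vertices $\{1,\dots,M\}$ and an edge $i\to j$ iff $a_{ij}\neq 0$; a path may be trivial (length zero). $A$ is WCDD if it is WDD and for each row $r$ there is a path in the graph of $A$ from $r$ to some SDD row. A real square matrix $A$ is monotone (in the sense of Collatz) if for every real vector $v$, $Av\geq 0$ (componentwise) implies $v\geq 0$. A Z-matrix is a real matrix with nonpositive off-diagonal entries. An M-matrix is a monotone Z-matrix. *)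

theory Defs
  imports "HOL-Analysis.Analysis"
begin

definition sdd_row :: "real^'n^'n \<Rightarrow> 'n \<Rightarrow> bool" where
  "sdd_row A i \<longleftrightarrow> \<bar>A $ i $ i\<bar> > (\<Sum>j\<in>UNIV - {i}. \<bar>A $ i $ j\<bar>)"

definition wdd_row :: "real^'n^'n \<Rightarrow> 'n \<Rightarrow> bool" where
  "wdd_row A i \<longleftrightarrow> \<bar>A $ i $ i\<bar> \<ge> (\<Sum>j\<in>UNIV - {i}. \<bar>A $ i $ j\<bar>)"

definition wdd :: "real^'n^'n \<Rightarrow> bool" where
  "wdd A \<longleftrightarrow> (\<forall>i. wdd_row A i)"

definition mat_graph :: "real^'n^'n \<Rightarrow> ('n \<times> 'n) set" where
  "mat_graph A = {(i, j). A $ i $ j \<noteq> 0}"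

text \<open>Paths may be trivial: reflexive transitive closure of the edge relation.\<close>
definition wcdd :: "real^'n^'n \<Rightarrow> bool" where
  "wcdd A \<longleftrightarrow> wdd A \<and> (\<forall>r. \<exists>s. (r, s) \<in> (mat_graph A)\<^sup>* \<and> sdd_row A s)"

definition monotone_mat :: "real^'n^'n \<Rightarrow> bool" where
  "monotone_mat A \<longleftrightarrow> (\<forall>v :: real^'n. (\<forall>i. (A *v v) $ i \<ge> 0) \<longrightarrow> (\<forall>i. v $ i \<ge> 0))"

definition z_matrix :: "real^'n^'n \<Rightarrow> bool" where
  "z_matrix A \<longleftrightarrow> (\<forall>i j. i \<noteq> j \<longrightarrow> A $ i $ j \<le> 0)"

definition m_matrix :: "real^'n^'n \<Rightarrow> bool" where
  "m_matrix A \<longleftrightarrow> z_matrix A \<and> monotone_mat A"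

end

theory Submission
  imports Defs
begin

text \<open>For a Z-matrix with nonnegative diagonal, weak (strict) diagonal dominance of a row just says
  that its row sum is nonnegative (positive). If such a matrix is WCDD and \<open>A v \<ge> 0\<close> while
  \<open>v\<close> has a negative entry, then every row attaining the minimum \<open>m < 0\<close> of \<open>v\<close> has row sum
  zero and only points to rows attaining \<open>m\<close> again; following a path to an SDD row gives a
  contradiction. Conversely, if some row \<open>r\<close> of a WDD M-matrix reached no SDD row, the negated
  indicator vector of the rows reachable from \<open>r\<close> would be mapped to a nonnegative vector.\<close>

definition row_sum :: "real^'n^'n \<Rightarrow> 'n \<Rightarrow> real" where
  "row_sum A i = (\<Sum>j\<in>UNIV. A $ i $ j)"

lemma row_sum_split_diag: "row_sum A i = A $ i $ i + (\<Sum>j\<in>UNIV - {i}. A $ i $ j)"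
  unfolding row_sum_def by (simp add: sum.remove)

lemma z_matrix_off_diag_abs_sum:
  assumes "z_matrix A"
  shows "(\<Sum>j\<in>UNIV - {i}. \<bar>A $ i $ j\<bar>) = A $ i $ i - row_sum A i"
proof -
  have "(\<Sum>j\<in>UNIV - {i}. \<bar>A $ i $ j\<bar>) = (\<Sum>j\<in>UNIV - {i}. - A $ i $ j)"
    using assms by (intro sum.cong) (auto simp: z_matrix_def abs_of_nonpos)
  then show ?thesis by (simp add: sum_negf row_sum_split_diag)
qed

lemma z_matrix_wdd_row_iff:
  assumes "z_matrix A" and "A $ i $ i \<ge> 0"
  shows "wdd_row A i \<longleftrightarrow> row_sum A i \<ge> 0"
  using assms by (simp add: wdd_row_def z_matrix_off_diag_abs_sum)

lemma z_matrix_sdd_row_iff: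
  assumes "z_matrix A" and "A $ i $ i \<ge> 0"
  shows "sdd_row A i \<longleftrightarrow> row_sum A i > 0"
  using assms by (simp add: sdd_row_def z_matrix_off_diag_abs_sum)

lemma mat_graph_rtrancl_closed:
  assumes closed: "\<And>i j. i \<in> S \<Longrightarrow> A $ i $ j \<noteq> 0 \<Longrightarrow> j \<in> S"
    and "(r, s) \<in> (mat_graph A)\<^sup>*" and "r \<in> S"
  shows "s \<in> S"
  using assms(2,3) by induction (auto simp: mat_graph_def intro: closed)

text \<open>Discrete minimum principle: \<open>(A v)\<^sub>i = m \<cdot> row_sum A i + \<Sum>\<^sub>j A\<^sub>i\<^sub>j (v\<^sub>j - m)\<close>,
  where both summands are nonpositive.\<close>

lemma z_matrix_min_entry_row:
  fixes v :: "real^'n"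
  assumes z: "z_matrix A" and Av: "(A *v v) $ i \<ge> 0" and row: "row_sum A i \<ge> 0"
    and min: "\<And>j. v $ i \<le> v $ j" and neg: "v $ i < 0"
  shows "row_sum A i = 0" and "\<And>j. A $ i $ j \<noteq> 0 \<Longrightarrow> v $ j = v $ i"
proof -
  let ?m = "v $ i"
  have term_nonpos: "A $ i $ j * (v $ j - ?m) \<le> 0" for j
  proof (cases "j = i")
    case False
    then have "A $ i $ j \<le> 0" using z by (simp add: z_matrix_def)
    then show ?thesis using min[of j] by (simp add: mult_nonpos_nonneg)
  qed simp
  have "(A *v v) $ i = ?m * row_sum A i + (\<Sum>j\<in>UNIV. A $ i $ j * (v $ j - ?m))"
    by (simp add: matrix_vector_mult_def row_sum_def sum_distrib_left sum_subtractf
        algebra_simps)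
  moreover have "?m * row_sum A i \<le> 0"
    using row neg by (simp add: mult_nonpos_nonneg)
  moreover have "(\<Sum>j\<in>UNIV. A $ i $ j * (v $ j - ?m)) \<le> 0"
    using term_nonpos by (simp add: sum_nonpos)
  ultimately have prod0: "?m * row_sum A i = 0"
    and sum0: "(\<Sum>j\<in>UNIV. A $ i $ j * (v $ j - ?m)) = 0"
    using Av by linarith+
  show "row_sum A i = 0" using prod0 neg by simp
  fix j
  assume "A $ i $ j \<noteq> 0"
  have "(\<Sum>j\<in>UNIV. - (A $ i $ j * (v $ j - ?m))) = 0"
    using sum0 by (simp add: sum_negf)
  then have "- (A $ i $ j * (v $ j - ?m)) = 0"
    using term_nonpos by (simp add: sum_nonneg_eq_0_iff)
  then show "v $ j = ?m" using \<open>A $ i $ j \<noteq> 0\<close> by simp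
qed

lemma wcdd_z_matrix_monotone:
  fixes A :: "real^'n^'n"
  assumes w: "wcdd A" and z: "z_matrix A" and diag: "\<And>i. A $ i $ i \<ge> 0"
  shows "monotone_mat A"
  unfolding monotone_mat_def
proof (intro allI impI)
  fix v :: "real^'n" and i0
  assume Av: "\<forall>i. (A *v v) $ i \<ge> 0"
  show "v $ i0 \<ge> 0"
  proof (rule ccontr)
    assume "\<not> v $ i0 \<ge> 0"
    define m where "m = Min (range (\<lambda>i. v $ i))"
    have min: "m \<le> v $ j" for j unfolding m_def by simp
    have "m \<in> range (\<lambda>i. v $ i)" unfolding m_def by (intro Min_in) auto
    then obtain r where r: "v $ r = m" by auto
    have neg: "m < 0" using min[of i0] \<open>\<not> v $ i0 \<ge> 0\<close> by simp
    define S where "S = {i. v $ i = m}"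
    have row_nonneg: "row_sum A i \<ge> 0" for i
      using w z diag by (simp add: wcdd_def wdd_def z_matrix_wdd_row_iff)
    have S_not_sdd: "\<not> sdd_row A i" and S_closed: "A $ i $ j \<noteq> 0 \<Longrightarrow> j \<in> S"
      if "i \<in> S" for i j
    proof -
      have vi: "v $ i = m" using that by (simp add: S_def)
      have min_i: "v $ i \<le> v $ k" for k using min vi by simp
      note row_min = z_matrix_min_entry_row[OF z _ row_nonneg min_i]
      have "row_sum A i = 0" using row_min(1) Av neg vi by simp
      then show "\<not> sdd_row A i" by (simp add: z_matrix_sdd_row_iff[OF z diag])
      show "A $ i $ j \<noteq> 0 \<Longrightarrow> j \<in> S" using row_min(2)[of j] Av neg vi by (simp add: S_def)
    qed
    obtain s where "(r, s) \<in> (mat_graph A)\<^sup>*" and "sdd_row A s"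
      using w by (auto simp: wcdd_def)
    moreover have "r \<in> S" using r by (simp add: S_def)
    ultimately show False
      using mat_graph_rtrancl_closed[of S A] S_closed S_not_sdd by blast
  qed
qed

lemma m_matrix_diag_pos:
  fixes A :: "real^'n^'n"
  assumes m: "m_matrix A"
  shows "A $ i $ i > 0"
proof (rule ccontr)
  assume "\<not> A $ i $ i > 0"
  define v :: "real^'n" where "v = (\<chi> j. if j = i then -1 else 0)"
  have "(A *v v) $ k = - A $ k $ i" for k
    by (simp add: matrix_vector_mult_def v_def if_distrib cong: if_cong)
  moreover have "A $ k $ i \<le> 0" for k
    using m \<open>\<not> A $ i $ i > 0\<close> by (cases "k = i") (auto simp: m_matrix_def z_matrix_def)
  ultimately have "v $ i \<ge> 0" using m by (auto simp: m_matrix_def monotone_mat_def)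
  then show False by (simp add: v_def)
qed

lemma z_matrix_mult_neg_indicator_nonneg:
  assumes z: "z_matrix A"
    and closed: "\<And>k j. k \<in> R \<Longrightarrow> j \<notin> R \<Longrightarrow> A $ k $ j = 0"
    and row: "\<And>k. k \<in> R \<Longrightarrow> row_sum A k \<le> 0"
  shows "(A *v (\<chi> j. if j \<in> R then -1 else 0)) $ k \<ge> 0"
proof -
  have "(A *v (\<chi> j. if j \<in> R then -1 else 0)) $ k = - (\<Sum>j\<in>R. A $ k $ j)"
    by (simp add: matrix_vector_mult_def if_distrib sum.inter_restrict[symmetric] sum_negf
        cong: if_cong)
  moreover have "(\<Sum>j\<in>R. A $ k $ j) \<le> 0"
  proof (cases "k \<in> R")
    case True
    then have "(\<Sum>j\<in>R. A $ k $ j) = row_sum A k"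
      unfolding row_sum_def using closed by (intro sum.mono_neutral_left) auto
    then show ?thesis using row True by simp
  next
    case False
    then show ?thesis using z by (intro sum_nonpos) (metis z_matrix_def)
  qed
  ultimately show ?thesis by simp
qed

lemma wdd_m_matrix_wcdd:
  fixes A :: "real^'n^'n"
  assumes wd: "wdd A" and m: "m_matrix A"
  shows "wcdd A"
  unfolding wcdd_def
proof (intro conjI allI wd)
  fix r
  show "\<exists>s. (r, s) \<in> (mat_graph A)\<^sup>* \<and> sdd_row A s"
  proof (rule ccontr)
    assume no_sdd: "\<not> ?thesis"
    have z: "z_matrix A" using m by (simp add: m_matrix_def)
    define R where "R = {s. (r, s) \<in> (mat_graph A)\<^sup>*}"
    have closed: "A $ k $ j = 0" if "k \<in> R" "j \<notin> R" for k j
      using that by (auto simp: R_def mat_graph_def intro: rtrancl_into_rtrancl)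
    have "row_sum A k \<le> 0" if "k \<in> R" for k
      using no_sdd that z_matrix_sdd_row_iff[OF z less_imp_le[OF m_matrix_diag_pos[OF m]]]
      by (auto simp: R_def)
    then have "\<forall>k. (A *v (\<chi> j. if j \<in> R then -1 else 0)) $ k \<ge> 0"
      using z_matrix_mult_neg_indicator_nonneg[OF z closed] by blast
    then have "(\<chi> j. if j \<in> R then -1 else 0 :: real^'n) $ r \<ge> 0"
      using m unfolding m_matrix_def monotone_mat_def by blast
    then show False by (simp add: R_def)
  qed
qed

theorem theorem3p5:
  fixes A :: "real^'n^'n"
  shows "(wcdd A \<and> z_matrix A \<and> (\<forall>i. A $ i $ i > 0)) \<longleftrightarrow> (wdd A \<and> m_matrix A)"
proof
  assume "wcdd A \<and> z_matrix A \<and> (\<forall>i. A $ i $ i > 0)"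
  then show "wdd A \<and> m_matrix A"
    using wcdd_z_matrix_monotone[of A] by (auto simp: wcdd_def m_matrix_def less_imp_le)
next
  assume "wdd A \<and> m_matrix A"
  then show "wcdd A \<and> z_matrix A \<and> (\<forall>i. A $ i $ i > 0)"
    using wdd_m_matrix_wcdd m_matrix_diag_pos by (auto simp: m_matrix_def)
qed

end
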